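(* Let $(M,\mathcal{T})$ be a closed pseudo 3-manifold with edge set $E$. For any initial generalized decorated metric $l_0\in\mathbb{R}^E$, there exists a unique solution $\{l(t)\mid t\in[0,\infty)\}\subset\mathbb{R}^E$ to the extended Ricci flow $$\frac{d}{dt}l(t)=\widetilde{K}(l(t)),\quad t\ge 0,\qquad l(0)=l_0.$$
   Context: Pseudo 3-manifold: take finitely many tetrahedra $T_1,\dots,T_t$ and let $\mathscr{T}=T_1\sqcup\cdots\sqcup T_t$. The quotient $(M,\mathcal{T})=\mathscr{T}/\sim$ by a family of affine isomorphisms pairing faces of the tetrahedra is a compact pseudo 3-manifold with triangulation $\mathcal{T}$; it is closed if every 2-dimensional face of a tetrahedron in $\mathscr{T}$ is identified with another such face. $V$ and $E$ denote the sets of (equivalence classes of) vertices and edges of $\mathcal{T}$. For a tetrahedron $\sigma$ of $\mathscr{T}$ with vertices $v_1,\dots,v_4$ and $l\in\mathbb{R}^E$, let $l_\sigma=(l_{12},\dots,l_{34})\in\mathbb{R}^6$ where $l_{ij}=l(\text{class of }v_iv_j)$. Generalized Euclidean triangle angles: for $(x_1,x_2,x_3)\in\mathbb{R}^3_{>0}$, if strict triangle inequalities hold, $a_i$ is the inner angle of the Euclidean triangle with side lengths $x_1,x_2,x_3$ opposite to the side of length $x_i$; if $x_i\ge x_j+x_k$ ($\{i,j,k\}=\{1,2,3\}$), then $a_i=\pi$, $a_j=a_k=0$. Extended dihedral angles: for $l=(l_{12},\dots,l_{34})\in\mathbb{R}^6$ (with $l_{ij}=l_{ji}$) and $\{i,j,k,h\}=\{1,2,3,4\}$,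 $\alpha_{ij}(l)$ is the generalized angle opposite to the side of length $e^{(l_{ij}+l_{kh})/2}$ in the generalized Euclidean triangle with side lengths $e^{(l_{ij}+l_{kh})/2}, e^{(l_{ik}+l_{jh})/2}, e^{(l_{ih}+l_{jk})/2}$. (When strict triangle inequalities hold, these are the dihedral angles of the decorated ideal hyperbolic tetrahedron with signed edge lengths $l_{ij}$.) A generalized decorated metric is any $l\in\mathbb{R}^E$. Its generalized Ricci curvature at $e\in E$ is $\widetilde{K}_e(l)=2\pi-\sum \alpha_{ij}(l_\sigma)$, the sum over all pairs $(\sigma, v_iv_j)$ with $\sigma$ a tetrahedron of $\mathscr{T}$ and $v_iv_j$ an edge of $\sigma$ lying in the class $e$; $\widetilde K(l)=(\widetilde K_e(l))_{e\in E}$. *)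

theory Defs
  imports Complex_Main
begin

text \<open>Tetrahedra are the elements of a finite set T :: 'a set; the vertices of each
  tetrahedron are labelled 0,1,2,3.  A 2-face of a tetrahedron sigma is written
  (sigma, k), the face opposite to vertex k.  A face pairing is given by
  glue :: 'a \<times> nat \<Rightarrow> ('a \<times> nat \<times> (nat \<Rightarrow> nat)) option:
  glue (sigma,k) = Some (tau,m,phi) means face (sigma,k) is identified with the
  distinct face (tau,m) by the affine isomorphism sending vertex i to vertex phi i.
  An edge of the disjoint union is (sigma, {i,j}) with i \<noteq> j.\<close>

definition pseudo3 :: "'a set \<Rightarrow> ('a \<times> nat \<Rightarrow> ('a \<times> nat \<times> (nat \<Rightarrow> nat)) option) \<Rightarrow> bool" where
  "pseudo3 T glue \<longleftrightarrow> finite T \<and>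
     (\<forall>\<sigma> k. glue (\<sigma>, k) \<noteq> None \<longrightarrow> \<sigma> \<in> T \<and> k < 4) \<and>
     (\<forall>\<sigma> k \<tau> m \<phi>. glue (\<sigma>, k) = Some (\<tau>, m, \<phi>) \<longrightarrow>
        \<tau> \<in> T \<and> m < 4 \<and> (\<tau>, m) \<noteq> (\<sigma>, k) \<and>
        bij_betw \<phi> ({..<4} - {k}) ({..<4} - {m}) \<and>
        (\<exists>\<psi>. glue (\<tau>, m) = Some (\<sigma>, k, \<psi>) \<and> (\<forall>i \<in> {..<4} - {k}. \<psi> (\<phi> i) = i)))"

definition closed3 :: "'a set \<Rightarrow> ('a \<times> nat \<Rightarrow> ('a \<times> nat \<times> (nat \<Rightarrow> nat)) option) \<Rightarrow> bool" where
  "closed3 T glue \<longleftrightarrow> (\<forall>\<sigma>\<in>T. \<forall>k<4. glue (\<sigma>, k) \<noteq> None)"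

definition tet_edges :: "'a set \<Rightarrow> ('a \<times> nat set) set" where
  "tet_edges T = {(\<sigma>, {i, j}) | \<sigma> i j. \<sigma> \<in> T \<and> i < 4 \<and> j < 4 \<and> i \<noteq> j}"

definition edge_step :: "('a \<times> nat \<Rightarrow> ('a \<times> nat \<times> (nat \<Rightarrow> nat)) option) \<Rightarrow> (('a \<times> nat set) \<times> ('a \<times> nat set)) set" where
  "edge_step glue = {((\<sigma>, {i, j}), (\<tau>, {\<phi> i, \<phi> j})) | \<sigma> k \<tau> m \<phi> i j.
      glue (\<sigma>, k) = Some (\<tau>, m, \<phi>) \<and> i < 4 \<and> j < 4 \<and> i \<noteq> j \<and> i \<noteq> k \<and> j \<noteq> k}"

definition edge_rel :: "'a set \<Rightarrow> ('a \<times> nat \<Rightarrow> ('a \<times> nat \<times> (nat \<Rightarrow> nat)) option) \<Rightarrow> (('a \<times> nat set) \<times> ('a \<times> nat set)) set" where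
  "edge_rel T glue = Id_on (tet_edges T) \<union> (edge_step glue \<union> (edge_step glue)\<inverse>)\<^sup>+"

definition edge_class :: "'a set \<Rightarrow> ('a \<times> nat \<Rightarrow> ('a \<times> nat \<times> (nat \<Rightarrow> nat)) option) \<Rightarrow> 'a \<times> nat set \<Rightarrow> ('a \<times> nat set) set" where
  "edge_class T glue x = edge_rel T glue `` {x}"

definition edges :: "'a set \<Rightarrow> ('a \<times> nat \<Rightarrow> ('a \<times> nat \<times> (nat \<Rightarrow> nat)) option) \<Rightarrow> ('a \<times> nat set) set set" where
  "edges T glue = tet_edges T // edge_rel T glue"

definition gen_angle :: "real \<Rightarrow> real \<Rightarrow> real \<Rightarrow> real" where
  "gen_angle a b c =
     (if a \<ge> b + c then pi
      else if b \<ge> a + c \<or> c \<ge> a + b then 0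
      else arccos ((b\<^sup>2 + c\<^sup>2 - a\<^sup>2) / (2 * b * c)))"

text \<open>Extended dihedral angle at the edge {i,j} of a tetrahedron with vertices 0..3
  whose (signed) edge lengths are L {p,q}; {k,h} is the opposite edge.\<close>
definition ext_dihedral :: "(nat set \<Rightarrow> real) \<Rightarrow> nat \<Rightarrow> nat \<Rightarrow> real" where
  "ext_dihedral L i j =
     (let k = Min ({..<4} - {i, j}); h = Max ({..<4} - {i, j}) in
      gen_angle (exp ((L {i, j} + L {k, h}) / 2))
                (exp ((L {i, k} + L {j, h}) / 2))
                (exp ((L {i, h} + L {j, k}) / 2)))"

definition gen_curv :: "'a set \<Rightarrow> ('a \<times> nat \<Rightarrow> ('a \<times> nat \<times> (nat \<Rightarrow> nat)) option) \<Rightarrow> (('a \<times> nat set) set \<Rightarrow> real) \<Rightarrow> ('a \<times> nat set) set \<Rightarrow> real" where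
  "gen_curv T glue l e = 2 * pi -
     (\<Sum>(\<sigma>, p) \<in> {x \<in> tet_edges T. edge_class T glue x = e}.
        ext_dihedral (\<lambda>q. l (edge_class T glue (\<sigma>, q))) (Min p) (Max p))"

definition ricci_flow_solution :: "'a set \<Rightarrow> ('a \<times> nat \<Rightarrow> ('a \<times> nat \<times> (nat \<Rightarrow> nat)) option) \<Rightarrow> (('a \<times> nat set) set \<Rightarrow> real) \<Rightarrow> (real \<Rightarrow> ('a \<times> nat set) set \<Rightarrow> real) \<Rightarrow> bool" where
  "ricci_flow_solution T glue l0 l \<longleftrightarrow>
     (\<forall>e \<in> edges T glue. l 0 e = l0 e) \<and>
     (\<forall>t \<ge> 0. \<forall>e \<in> edges T glue.
        ((\<lambda>s. l s e) has_real_derivative gen_curv T glue (l t) e) (at t within {0..}))"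

end

theory Submission
  imports Defs "HOL-Analysis.Analysis"
begin

(* The extended dihedral angles of a tetrahedron, as functions of the three sums
   s_1 = l_01 + l_23, s_2 = l_02 + l_13, s_3 = l_03 + l_12 of opposite signed edge lengths,
   form a monotone map of R^3.  Along a segment, at nondegenerate tetrahedra the derivative of
   the pairing with the direction is a positive semidefinite quadratic form (2 y_2 times it is
   a sum of squares, Heron's expression being one coefficient); at degenerate ones the angles
   are a permutation of (pi, 0, 0), so the pairing takes only finitely many values there, and
   a continuous function with nonnegative derivative off such a set cannot decrease.  Summing over
   tetrahedra, the curvature field K is dissipative, sum_e (K x - K y)_e (x_e - y_e) <= 0;
   it is also bounded and uniformly continuous on bounded sets.

   For such a field the squared distance between two Euler polygons has derivative at most
   of the order of the local truncation errors, so the polygons are uniformly Cauchy on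
   compact time intervals; their limit satisfies the integral equation and hence the flow.
   Uniqueness holds because the squared distance between two solutions is nonincreasing. *)

lemma continuous_on_last_crossing:
  fixes g :: "real \<Rightarrow> real"
  assumes "a \<le> b" "continuous_on {a..b} g" "g b < y" "y \<le> g a"
  obtains c where "a \<le> c" "c < b" "g c = y" "\<And>u. c < u \<Longrightarrow> u \<le> b \<Longrightarrow> g u < y"
proof -
  define S where "S = {a..b} \<inter> g -` {y..}"
  have "closed S"
    unfolding S_def using assms(2) by (rule continuous_closed_preimage) auto
  moreover have "a \<in> S" "bdd_above S"
    unfolding S_def using assms by auto
  ultimately have "Sup S \<in> S"
    using closed_contains_Sup by blast
  then have sup: "a \<le> Sup S" "Sup S \<le> b" "y \<le> g (Sup S)"
    unfolding S_def by auto
  have after: "g u < y" if "Sup S < u" "u \<le> b" for u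
  proof (rule ccontr)
    assume "\<not> g u < y"
    then have "u \<in> S"
      using that sup unfolding S_def by auto
    then show False
      using cSup_upper[OF _ \<open>bdd_above S\<close>] that by fastforce
  qed
  have "Sup S \<noteq> b"
    using sup assms(3) by auto
  with sup have "Sup S < b"
    by simp
  have "continuous_on {Sup S..b} g"
    using assms(2) by (rule continuous_on_subset) (use sup in auto)
  then obtain c' where c': "Sup S \<le> c'" "c' \<le> b" "g c' = y"
    using IVT2'[of g b y "Sup S"] sup assms(3) by auto
  have "c' = Sup S"
    using after[of c'] c' by (cases "Sup S < c'") auto
  with c' have "g (Sup S) = y"
    by simp
  show ?thesis
    by (rule that[of "Sup S"]) (use sup \<open>Sup S < b\<close> \<open>g (Sup S) = y\<close> after in auto)
qed

lemma le_if_nonneg_deriv_off_finite_values: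
  fixes g :: "real \<Rightarrow> real"
  assumes "a \<le> b" "continuous_on {a..b} g" "finite V" "open S"
    and values_off: "\<And>\<tau>. \<tau> \<in> {a..b} \<Longrightarrow> \<tau> \<notin> S \<Longrightarrow> g \<tau> \<in> V"
    and deriv_on: "\<And>\<tau>. \<tau> \<in> S \<Longrightarrow> \<exists>y. (g has_real_derivative y) (at \<tau>) \<and> 0 \<le> y"
  shows "g a \<le> g b"
proof (rule ccontr)
  assume "\<not> g a \<le> g b"
  then have "infinite {g b<..<g a}"
    by simp
  then have "\<not> {g b<..<g a} \<subseteq> V"
    using \<open>finite V\<close> finite_subset by blast
  then obtain y where y: "g b < y" "y \<le> g a" "y \<notin> V"
    by (auto simp: subset_iff)
  obtain c where c: "a \<le> c" "c < b" "g c = y" and after: "\<And>u. c < u \<Longrightarrow> u \<le> b \<Longrightarrow> g u < y"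
    using continuous_on_last_crossing[OF assms(1,2) y(1,2)] by blast
  have "c \<in> S"
    using values_off[of c] c y(3) by auto
  then obtain \<delta> where "0 < \<delta>" "ball c \<delta> \<subseteq> S"
    using \<open>open S\<close> openE by blast
  define u where "u = min (c + \<delta>/2) b"
  have u: "c < u" "u \<le> b"
    using \<open>0 < \<delta>\<close> c unfolding u_def by auto
  have "{c..u} \<subseteq> S"
    using \<open>0 < \<delta>\<close> \<open>ball c \<delta> \<subseteq> S\<close> unfolding u_def ball_def dist_real_def by auto
  then have "g c \<le> g u"
    using u(1) by (intro DERIV_nonneg_imp_nondecreasing[of c u g] deriv_on) auto
  then show False
    using after[OF u] c(3) by simp
qed

lemma le_by_deriv_bound_off_finite:
  fixes \<phi> \<phi>' :: "real \<Rightarrow> real"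
  assumes "a \<le> b" "finite S" "continuous_on {a..b} \<phi>"
    and deriv: "\<And>x. x \<in> {a<..<b} - S \<Longrightarrow> (\<phi> has_real_derivative \<phi>' x) (at x)"
    and bound: "\<And>x. x \<in> {a<..<b} - S \<Longrightarrow> \<phi>' x \<le> K"
  shows "\<phi> b - \<phi> a \<le> K * (b - a)"
proof -
  define \<psi> where "\<psi> x = (if x \<in> {a<..<b} - S then \<phi>' x else K)" for x
  have "(\<psi> has_integral (\<phi> b - \<phi> a)) {a..b}"
  proof (rule fundamental_theorem_of_calculus_interior_strong[OF assms(2,1) _ assms(3)])
    show "(\<phi> has_vector_derivative \<psi> x) (at x)" if "x \<in> {a<..<b} - S" for x
      using deriv[OF that] that by (simp add: \<psi>_def has_real_derivative_iff_has_vector_derivative)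
  qed
  moreover have "((\<lambda>_. K) has_integral K * (b - a)) {a..b}"
    using has_integral_const_real[of K a b] assms(1) by (simp add: mult.commute)
  ultimately show ?thesis
    by (rule has_integral_le) (use bound in \<open>auto simp: \<psi>_def\<close>)
qed

section \<open>Generalized angles\<close>

definition log_angle :: "real \<Rightarrow> real \<Rightarrow> real \<Rightarrow> real" where
  "log_angle s1 s2 s3 = gen_angle (exp (s1/2)) (exp (s2/2)) (exp (s3/2))"

definition strict_triangle :: "real \<Rightarrow> real \<Rightarrow> real \<Rightarrow> bool" where
  "strict_triangle a b c \<longleftrightarrow> a < b + c \<and> b < a + c \<and> c < a + b"

lemma gen_angle_eq_arccos_clamp:
  assumes a: "0 < a" and b: "0 < b" and c: "0 < c"
  shows "gen_angle a b c = arccos (max (-1) (min 1 ((b\<^sup>2 + c\<^sup>2 - a\<^sup>2) / (2*b*c))))"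
proof -
  define q where "q = (b\<^sup>2 + c\<^sup>2 - a\<^sup>2) / (2*b*c)"
  have bc: "0 < 2*b*c" using b c by simp
  have "q \<le> -1 \<longleftrightarrow> (b + c)\<^sup>2 \<le> a\<^sup>2"
    unfolding q_def using bc by (simp add: divide_le_eq power2_eq_square algebra_simps)
  also have "\<dots> \<longleftrightarrow> b + c \<le> a"
    using a b c by (simp add: power_mono_iff)
  finally have lo: "q \<le> -1 \<longleftrightarrow> b + c \<le> a" .
  have "1 \<le> q \<longleftrightarrow> a\<^sup>2 \<le> (b - c)\<^sup>2"
    unfolding q_def using bc by (simp add: le_divide_eq power2_eq_square algebra_simps)
  also have "\<dots> \<longleftrightarrow> \<bar>a\<bar> \<le> \<bar>b - c\<bar>"
    by (simp add: abs_le_square_iff)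
  also have "\<dots> \<longleftrightarrow> a + c \<le> b \<or> a + b \<le> c"
    using a by arith
  finally have hi: "1 \<le> q \<longleftrightarrow> a + c \<le> b \<or> a + b \<le> c" .
  show ?thesis
    using lo hi a unfolding gen_angle_def q_def[symmetric] by (auto simp: max_def min_def)
qed

lemma gen_angle_bounds:
  assumes "0 < a" "0 < b" "0 < c"
  shows "0 \<le> gen_angle a b c" "gen_angle a b c \<le> pi"
  using gen_angle_eq_arccos_clamp[OF assms] arccos_lbound arccos_ubound by auto

lemma gen_angle_degenerate:
  assumes "0 < a" "0 < b" "0 < c" "\<not> strict_triangle a b c"
  shows "(gen_angle a b c, gen_angle b a c, gen_angle c a b) \<in> {(pi, 0, 0), (0, pi, 0), (0, 0, pi)}"
  using assms unfolding strict_triangle_def gen_angle_def by auto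

lemma continuous_on_log_angle [continuous_intros]:
  assumes "continuous_on S f1" "continuous_on S f2" "continuous_on S f3"
  shows "continuous_on S (\<lambda>x. log_angle (f1 x) (f2 x) (f3 x))"
proof -
  have "continuous_on S (\<lambda>x. arccos (max (-1) (min 1
          (((exp (f2 x/2))\<^sup>2 + (exp (f3 x/2))\<^sup>2 - (exp (f1 x/2))\<^sup>2) / (2 * exp (f2 x/2) * exp (f3 x/2))))))"
    by (intro continuous_on_arccos continuous_intros assms) auto
  then show ?thesis
    by (simp add: log_angle_def gen_angle_eq_arccos_clamp)
qed

lemma uniformly_continuous_on_log_angle:
  "compact K \<Longrightarrow> uniformly_continuous_on K (\<lambda>(a, b, c). log_angle a b c)"
  by (intro compact_uniformly_continuous) (simp add: case_prod_unfold continuous_intros)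

lemma dist_triple_le:
  fixes a b c a' b' c' :: real
  shows "dist (a, b, c) (a', b', c') \<le> \<bar>a - a'\<bar> + \<bar>b - b'\<bar> + \<bar>c - c'\<bar>"
proof -
  have "dist (a, b, c) (a', b', c') = norm (a - a', b - b', c - c')"
    by (simp add: dist_norm)
  also have "\<dots> \<le> norm (a - a') + norm (b - b', c - c')"
    by (rule norm_Pair_le)
  also have "norm (b - b', c - c') \<le> norm (b - b') + norm (c - c')"
    by (rule norm_Pair_le)
  finally show ?thesis
    by simp
qed

lemma log_angle_uniformly_continuous_cube:
  assumes "0 < \<epsilon>"
  obtains \<delta> where "0 < \<delta>"
    "\<And>a b c a' b' c'. \<bar>a\<bar> \<le> R \<Longrightarrow> \<bar>b\<bar> \<le> R \<Longrightarrow> \<bar>c\<bar> \<le> R \<Longrightarrow> \<bar>a'\<bar> \<le> R \<Longrightarrow> \<bar>b'\<bar> \<le> R \<Longrightarrow> \<bar>c'\<bar> \<le> R \<Longrightarrow>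
       \<bar>a - a'\<bar> \<le> \<delta> \<Longrightarrow> \<bar>b - b'\<bar> \<le> \<delta> \<Longrightarrow> \<bar>c - c'\<bar> \<le> \<delta> \<Longrightarrow>
       \<bar>log_angle a b c - log_angle a' b' c'\<bar> \<le> \<epsilon>"
proof -
  define K where "K = {-R..R} \<times> {-R..R} \<times> {-R..R}"
  have "uniformly_continuous_on K (\<lambda>(a, b, c). log_angle a b c)"
    unfolding K_def by (intro uniformly_continuous_on_log_angle compact_Times compact_Icc)
  then obtain d where "0 < d" and d: "\<And>x x'. x \<in> K \<Longrightarrow> x' \<in> K \<Longrightarrow> dist x' x < d \<Longrightarrow>
      dist ((\<lambda>(a, b, c). log_angle a b c) x') ((\<lambda>(a, b, c). log_angle a b c) x) < \<epsilon>"
    unfolding uniformly_continuous_on_def using assms by metis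
  show ?thesis
  proof (rule that[of "d/4"])
    fix a b c a' b' c' :: real
    assume "\<bar>a\<bar> \<le> R" "\<bar>b\<bar> \<le> R" "\<bar>c\<bar> \<le> R" "\<bar>a'\<bar> \<le> R" "\<bar>b'\<bar> \<le> R" "\<bar>c'\<bar> \<le> R"
      and "\<bar>a - a'\<bar> \<le> d/4" "\<bar>b - b'\<bar> \<le> d/4" "\<bar>c - c'\<bar> \<le> d/4"
    then have "(a, b, c) \<in> K" "(a', b', c') \<in> K" "dist (a', b', c') (a, b, c) < d"
      using dist_triple_le[of a' b' c' a b c] \<open>0 < d\<close> by (auto simp: K_def abs_le_iff abs_minus_commute)
    from d[OF this] show "\<bar>log_angle a b c - log_angle a' b' c'\<bar> \<le> \<epsilon>"
      by (simp add: dist_real_def)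
  qed (use \<open>0 < d\<close> in simp)
qed

section \<open>Monotonicity of the angle map\<close>

text \<open>Sixteen times the squared area of a triangle with squared side lengths y1, y2, y3 (Heron).\<close>
definition heron :: "real \<Rightarrow> real \<Rightarrow> real \<Rightarrow> real" where
  "heron y1 y2 y3 = 2 * (y1*y2 + y2*y3 + y3*y1) - y1\<^sup>2 - y2\<^sup>2 - y3\<^sup>2"

lemma heron_pos:
  assumes "strict_triangle a b c"
  shows "0 < heron (a\<^sup>2) (b\<^sup>2) (c\<^sup>2)"
proof -
  have "heron (a\<^sup>2) (b\<^sup>2) (c\<^sup>2) = (a + b + c) * (b + c - a) * (a + c - b) * (a + b - c)"
    unfolding heron_def by algebra
  then show ?thesis
    using assms unfolding strict_triangle_def by simp
qed

lemma law_of_cosines_sin: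
  assumes "strict_triangle a b c" "0 < b" "0 < c"
  defines "q \<equiv> (b\<^sup>2 + c\<^sup>2 - a\<^sup>2) / (2*b*c)"
  shows "-1 < q" "q < 1" "sqrt (1 - q\<^sup>2) = sqrt (heron (a\<^sup>2) (b\<^sup>2) (c\<^sup>2)) / (2*b*c)"
proof -
  have "1 - q\<^sup>2 = ((2*b*c)\<^sup>2 - (b\<^sup>2 + c\<^sup>2 - a\<^sup>2)\<^sup>2) / (2*b*c)\<^sup>2"
    using assms(2,3) by (simp add: q_def field_simps)
  also have "(2*b*c)\<^sup>2 - (b\<^sup>2 + c\<^sup>2 - a\<^sup>2)\<^sup>2 = heron (a\<^sup>2) (b\<^sup>2) (c\<^sup>2)"
    unfolding heron_def by algebra
  finally have sin2: "1 - q\<^sup>2 = heron (a\<^sup>2) (b\<^sup>2) (c\<^sup>2) / (2*b*c)\<^sup>2" .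
  moreover have "0 < heron (a\<^sup>2) (b\<^sup>2) (c\<^sup>2) / (2*b*c)\<^sup>2"
    using heron_pos[OF assms(1)] assms(2,3) by simp
  ultimately have "q\<^sup>2 < 1"
    by linarith
  then show "-1 < q" "q < 1"
    by (auto simp: abs_square_less_1 abs_less_iff)
  show "sqrt (1 - q\<^sup>2) = sqrt (heron (a\<^sup>2) (b\<^sup>2) (c\<^sup>2)) / (2*b*c)"
    unfolding sin2 real_sqrt_divide using assms(2,3) by simp
qed

lemma open_strict_triangle_line:
  "open {\<sigma>. strict_triangle (exp ((t1 + \<sigma>*d1)/2)) (exp ((t2 + \<sigma>*d2)/2)) (exp ((t3 + \<sigma>*d3)/2))}"
  unfolding strict_triangle_def
  by (intro open_Collect_conj open_Collect_less continuous_intros) auto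

lemma has_real_derivative_log_angle_line:
  fixes t1 t2 t3 d1 d2 d3 \<tau> :: real
  defines "x1 \<equiv> exp ((t1 + \<tau>*d1)/2)" and "x2 \<equiv> exp ((t2 + \<tau>*d2)/2)" and "x3 \<equiv> exp ((t3 + \<tau>*d3)/2)"
  assumes tri: "strict_triangle x1 x2 x3"
  shows "((\<lambda>\<sigma>. log_angle (t1 + \<sigma>*d1) (t2 + \<sigma>*d2) (t3 + \<sigma>*d3)) has_real_derivative
           - ((d2 - d3)*(x2\<^sup>2 - x3\<^sup>2) + x1\<^sup>2*(d2 + d3 - 2*d1)) / (2 * sqrt (heron (x1\<^sup>2) (x2\<^sup>2) (x3\<^sup>2)))) (at \<tau>)"
proof -
  define side where "side t d \<sigma> = exp ((t + \<sigma>*d)/2)" for t d \<sigma> :: real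
  define cos_angle where "cos_angle \<sigma> = ((side t2 d2 \<sigma>)\<^sup>2 + (side t3 d3 \<sigma>)\<^sup>2 - (side t1 d1 \<sigma>)\<^sup>2)
                             / (2 * side t2 d2 \<sigma> * side t3 d3 \<sigma>)" for \<sigma>
  define N where "N = (d2 - d3)*(x2\<^sup>2 - x3\<^sup>2) + x1\<^sup>2*(d2 + d3 - 2*d1)"
  define Q where "Q = heron (x1\<^sup>2) (x2\<^sup>2) (x3\<^sup>2)"
  have x: "0 < x1" "0 < x2" "0 < x3"
    unfolding x1_def x2_def x3_def by simp_all
  have Q: "0 < Q"
    unfolding Q_def using heron_pos[OF tri] .
  have side_deriv: "(side t d has_real_derivative side t d \<sigma> * (d/2)) (at \<sigma>)" for t d \<sigma>
    unfolding side_def by (auto intro!: derivative_eq_intros)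
  have cos_deriv: "(cos_angle has_real_derivative N / (4*x2*x3)) (at \<tau>)"
    unfolding cos_angle_def[abs_def] N_def x1_def x2_def x3_def
    by (rule derivative_eq_intros side_deriv refl | simp add: side_def)+
       (simp add: field_simps power2_eq_square)
  have "cos_angle \<tau> = (x2\<^sup>2 + x3\<^sup>2 - x1\<^sup>2) / (2 * x2 * x3)"
    by (simp add: cos_angle_def side_def x1_def x2_def x3_def)
  then have cos_range: "-1 < cos_angle \<tau>" "cos_angle \<tau> < 1"
    and sin: "sqrt (1 - (cos_angle \<tau>)\<^sup>2) = sqrt Q / (2*x2*x3)"
    using law_of_cosines_sin[OF tri x(2,3)] by (simp_all add: Q_def)
  have "((\<lambda>\<sigma>. arccos (cos_angle \<sigma>)) has_real_derivative - N / (2 * sqrt Q)) (at \<tau>)"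
    using DERIV_chain2[OF DERIV_arccos[OF cos_range] cos_deriv] x Q
    by (simp add: sin field_simps)
  moreover have "open {\<sigma>. strict_triangle (side t1 d1 \<sigma>) (side t2 d2 \<sigma>) (side t3 d3 \<sigma>)}"
    unfolding side_def by (rule open_strict_triangle_line)
  moreover have "\<tau> \<in> {\<sigma>. strict_triangle (side t1 d1 \<sigma>) (side t2 d2 \<sigma>) (side t3 d3 \<sigma>)}"
    using tri by (simp add: side_def x1_def x2_def x3_def)
  moreover have "arccos (cos_angle \<sigma>) = log_angle (t1 + \<sigma>*d1) (t2 + \<sigma>*d2) (t3 + \<sigma>*d3)"
    if "strict_triangle (side t1 d1 \<sigma>) (side t2 d2 \<sigma>) (side t3 d3 \<sigma>)" for \<sigma>
    using that unfolding log_angle_def gen_angle_def strict_triangle_def cos_angle_def side_def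
    by auto
  ultimately show ?thesis
    unfolding N_def[symmetric] Q_def[symmetric]
    by (rule has_field_derivative_transform_within_open) auto
qed

definition angle_action :: "real \<Rightarrow> real \<Rightarrow> real \<Rightarrow> real \<Rightarrow> real \<Rightarrow> real \<Rightarrow> real" where
  "angle_action s1 s2 s3 d1 d2 d3 =
     log_angle s1 s2 s3 * d1 + log_angle s2 s1 s3 * d2 + log_angle s3 s1 s2 * d3"

text \<open>Up to the factor 2 sqrt (heron y1 y2 y3), the form is the derivative of angle_action along
  the direction (d1, d2, d3); the y's are the squared side lengths.\<close>
lemma log_angle_jacobian_form_nonneg:
  fixes y1 y2 y3 d1 d2 d3 :: real
  assumes "0 < y2" "0 \<le> heron y1 y2 y3"
  shows "0 \<le> - (d1 * ((d2 - d3)*(y2 - y3) + y1*(d2 + d3 - 2*d1))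
              + d2 * ((d1 - d3)*(y1 - y3) + y2*(d1 + d3 - 2*d2))
              + d3 * ((d1 - d2)*(y1 - y2) + y3*(d1 + d2 - 2*d3)))" (is "0 \<le> ?form")
proof -
  have "2*y2 * ?form = (2*y2*(d2 - d3) + (y1 + y2 - y3)*(d3 - d1))\<^sup>2 + heron y1 y2 y3 * (d3 - d1)\<^sup>2"
    unfolding heron_def by algebra
  also have "\<dots> \<ge> 0"
    using assms by simp
  finally show ?thesis
    using assms(1) by (simp add: zero_le_mult_iff)
qed

lemma angle_action_degenerate:
  assumes "\<not> strict_triangle (exp (s1/2)) (exp (s2/2)) (exp (s3/2))"
  shows "angle_action s1 s2 s3 d1 d2 d3 \<in> {pi*d1, pi*d2, pi*d3}"
  using gen_angle_degenerate[OF _ _ _ assms] unfolding angle_action_def log_angle_def by auto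

lemma angle_action_line_deriv_nonneg:
  fixes t1 t2 t3 d1 d2 d3 \<tau> :: real
  assumes "strict_triangle (exp ((t1 + \<tau>*d1)/2)) (exp ((t2 + \<tau>*d2)/2)) (exp ((t3 + \<tau>*d3)/2))"
  shows "\<exists>y. ((\<lambda>\<sigma>. angle_action (t1 + \<sigma>*d1) (t2 + \<sigma>*d2) (t3 + \<sigma>*d3) d1 d2 d3)
               has_real_derivative y) (at \<tau>) \<and> 0 \<le> y"
proof -
  define x1 where "x1 = exp ((t1 + \<tau>*d1)/2)"
  define x2 where "x2 = exp ((t2 + \<tau>*d2)/2)"
  define x3 where "x3 = exp ((t3 + \<tau>*d3)/2)"
  define Q where "Q = heron (x1\<^sup>2) (x2\<^sup>2) (x3\<^sup>2)"
  define N1 where "N1 = (d2 - d3)*(x2\<^sup>2 - x3\<^sup>2) + x1\<^sup>2*(d2 + d3 - 2*d1)"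
  define N2 where "N2 = (d1 - d3)*(x1\<^sup>2 - x3\<^sup>2) + x2\<^sup>2*(d1 + d3 - 2*d2)"
  define N3 where "N3 = (d1 - d2)*(x1\<^sup>2 - x2\<^sup>2) + x3\<^sup>2*(d1 + d2 - 2*d3)"
  have tri: "strict_triangle x1 x2 x3"
    using assms by (simp add: x1_def x2_def x3_def)
  then have tri': "strict_triangle x2 x1 x3" "strict_triangle x3 x1 x2"
    unfolding strict_triangle_def by auto
  have Q: "0 < Q"
    unfolding Q_def using heron_pos[OF tri] .
  have Q': "heron (x2\<^sup>2) (x1\<^sup>2) (x3\<^sup>2) = Q" "heron (x3\<^sup>2) (x1\<^sup>2) (x2\<^sup>2) = Q"
    unfolding Q_def heron_def by algebra+
  have deriv: "((\<lambda>\<sigma>. angle_action (t1 + \<sigma>*d1) (t2 + \<sigma>*d2) (t3 + \<sigma>*d3) d1 d2 d3) has_real_derivative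
          (- N1 / (2 * sqrt Q)) * d1 + (- N2 / (2 * sqrt Q)) * d2 + (- N3 / (2 * sqrt Q)) * d3) (at \<tau>)"
    unfolding angle_action_def N1_def N2_def N3_def
    by (intro DERIV_add DERIV_cmult_right)
       (use has_real_derivative_log_angle_line[of t1 \<tau> d1 t2 d2 t3 d3]
          has_real_derivative_log_angle_line[of t2 \<tau> d2 t1 d1 t3 d3]
          has_real_derivative_log_angle_line[of t3 \<tau> d3 t1 d1 t2 d2] tri tri' Q'
        in \<open>simp_all add: Q_def x1_def x2_def x3_def\<close>)
  have "0 \<le> - (d1 * N1 + d2 * N2 + d3 * N3)"
    unfolding N1_def N2_def N3_def
    by (rule log_angle_jacobian_form_nonneg) (use Q in \<open>simp_all add: Q_def x2_def\<close>)
  then have "0 \<le> - (d1 * N1 + d2 * N2 + d3 * N3) / (2 * sqrt Q)"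
    using Q by simp
  also have "\<dots> = (- N1 / (2 * sqrt Q)) * d1 + (- N2 / (2 * sqrt Q)) * d2 + (- N3 / (2 * sqrt Q)) * d3"
    using Q by (simp add: field_simps)
  finally show ?thesis
    using deriv by blast
qed

theorem angle_action_monotone:
  fixes s1 s2 s3 t1 t2 t3 :: real
  shows "angle_action t1 t2 t3 (s1 - t1) (s2 - t2) (s3 - t3)
           \<le> angle_action s1 s2 s3 (s1 - t1) (s2 - t2) (s3 - t3)"
proof -
  define d1 d2 d3 where "d1 = s1 - t1" and "d2 = s2 - t2" and "d3 = s3 - t3"
  define g where "g \<tau> = angle_action (t1 + \<tau>*d1) (t2 + \<tau>*d2) (t3 + \<tau>*d3) d1 d2 d3" for \<tau>
  have "g 0 \<le> g 1"
  proof (rule le_if_nonneg_deriv_off_finite_values[where g = g and a = 0 and b = 1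
        and V = "{pi*d1, pi*d2, pi*d3}", OF _ _ _ open_strict_triangle_line])
    show "continuous_on {0..1} g"
      unfolding g_def angle_action_def by (intro continuous_intros)
    show "g \<tau> \<in> {pi*d1, pi*d2, pi*d3}"
      if "\<tau> \<notin> {\<sigma>. strict_triangle (exp ((t1 + \<sigma>*d1)/2)) (exp ((t2 + \<sigma>*d2)/2)) (exp ((t3 + \<sigma>*d3)/2))}"
      for \<tau>
      using that unfolding g_def by (intro angle_action_degenerate) simp
    show "\<exists>y. (g has_real_derivative y) (at \<tau>) \<and> 0 \<le> y"
      if "\<tau> \<in> {\<sigma>. strict_triangle (exp ((t1 + \<sigma>*d1)/2)) (exp ((t2 + \<sigma>*d2)/2)) (exp ((t3 + \<sigma>*d3)/2))}"
      for \<tau>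
      using that unfolding g_def[abs_def] by (intro angle_action_line_deriv_nonneg) simp
  qed simp_all
  then show ?thesis
    unfolding g_def d1_def d2_def d3_def by simp
qed

section \<open>Dissipative initial value problems\<close>

definition ivp_solution ::
    "'e set \<Rightarrow> (('e \<Rightarrow> real) \<Rightarrow> 'e \<Rightarrow> real) \<Rightarrow> ('e \<Rightarrow> real) \<Rightarrow> (real \<Rightarrow> 'e \<Rightarrow> real) \<Rightarrow> bool" where
  "ivp_solution E F x0 x \<longleftrightarrow> (\<forall>e\<in>E. x 0 e = x0 e) \<and>
     (\<forall>t\<ge>0. \<forall>e\<in>E. ((\<lambda>s. x s e) has_real_derivative F (x t) e) (at t within {0..}))"

locale bounded_dissipative_field =
  fixes E :: "'e set" and F :: "('e \<Rightarrow> real) \<Rightarrow> 'e \<Rightarrow> real" and B :: real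
  assumes finite_E: "finite E"
    and B_pos: "0 < B"
    and F_bounded: "\<And>x e. e \<in> E \<Longrightarrow> \<bar>F x e\<bar> \<le> B"
    and F_uniformly_continuous: "\<And>R \<epsilon>. 0 < \<epsilon> \<Longrightarrow> \<exists>\<delta>>0. \<forall>x y.
           (\<forall>e\<in>E. \<bar>x e\<bar> \<le> R \<and> \<bar>y e\<bar> \<le> R \<and> \<bar>x e - y e\<bar> \<le> \<delta>) \<longrightarrow> (\<forall>e\<in>E. \<bar>F x e - F y e\<bar> \<le> \<epsilon>)"
    and F_dissipative: "\<And>x y. (\<Sum>e\<in>E. (F x e - F y e) * (x e - y e)) \<le> 0"
begin

lemma sq_le_sum_sq: "e \<in> E \<Longrightarrow> (u e)\<^sup>2 \<le> (\<Sum>e\<in>E. (u e :: real)\<^sup>2)"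
  using member_le_sum[of e E "\<lambda>e. (u e)\<^sup>2"] finite_E by simp

lemma ivp_solution_unique:
  assumes x: "ivp_solution E F x0 x" and y: "ivp_solution E F x0 y" and "0 \<le> t" "e \<in> E"
  shows "x t e = y t e"
proof -
  define \<phi> where "\<phi> s = (\<Sum>e\<in>E. (x s e - y s e)\<^sup>2)" for s
  define \<phi>' where "\<phi>' s = 2 * (\<Sum>e\<in>E. (F (x s) e - F (y s) e) * (x s e - y s e))" for s
  have deriv: "(\<phi> has_real_derivative \<phi>' s) (at s within {0..})" if "0 \<le> s" for s
    using x y that unfolding ivp_solution_def \<phi>_def[abs_def] \<phi>'_def sum_distrib_left
    by (intro DERIV_sum) (auto intro!: derivative_eq_intros simp: algebra_simps)
  have "\<phi> t - \<phi> 0 \<le> 0 * (t - 0)"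
  proof (rule le_by_deriv_bound_off_finite[where \<phi>' = \<phi>'])
    show "continuous_on {0..t} \<phi>"
      unfolding continuous_on_eq_continuous_within
    proof
      show "continuous (at s within {0..t}) \<phi>" if "s \<in> {0..t}" for s
        by (rule continuous_within_subset[OF DERIV_continuous[OF deriv]]) (use that in auto)
    qed
    show "(\<phi> has_real_derivative \<phi>' s) (at s)" if "s \<in> {0<..<t} - {}" for s
      using deriv[of s] that by (simp add: at_within_interior[of s "{0..}"])
    show "\<phi>' s \<le> 0" for s
      using F_dissipative[of "x s" "y s"] by (simp add: \<phi>'_def)
  qed (use \<open>0 \<le> t\<close> in auto)
  moreover have "\<phi> 0 = 0"
    using x y unfolding \<phi>_def ivp_solution_def by simp
  ultimately have "(x t e - y t e)\<^sup>2 \<le> 0"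
    using sq_le_sum_sq[OF \<open>e \<in> E\<close>, of "\<lambda>e. x t e - y t e"] unfolding \<phi>_def by linarith
  then show ?thesis
    by simp
qed

lemma dissipative_perturbed:
  assumes uv: "\<And>e. e \<in> E \<Longrightarrow> \<bar>u e - v e\<bar> \<le> D"
    and a: "\<And>e. e \<in> E \<Longrightarrow> \<bar>F a e - F u e\<bar> \<le> \<eta>"
    and b: "\<And>e. e \<in> E \<Longrightarrow> \<bar>F b e - F v e\<bar> \<le> \<eta>"
  shows "(\<Sum>e\<in>E. 2 * (u e - v e) * (F a e - F b e)) \<le> 4 * real (card E) * D * \<eta>"
proof -
  have "(\<Sum>e\<in>E. 2 * (u e - v e) * (F a e - F b e))
      = 2 * (\<Sum>e\<in>E. (F u e - F v e) * (u e - v e))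
        + 2 * (\<Sum>e\<in>E. (u e - v e) * ((F a e - F u e) - (F b e - F v e)))"
    by (simp add: sum_distrib_left sum.distrib[symmetric] algebra_simps)
  moreover have "(u e - v e) * ((F a e - F u e) - (F b e - F v e)) \<le> D * (2 * \<eta>)" if "e \<in> E" for e
  proof -
    have "(u e - v e) * ((F a e - F u e) - (F b e - F v e))
        \<le> \<bar>u e - v e\<bar> * \<bar>(F a e - F u e) - (F b e - F v e)\<bar>"
      by (metis abs_ge_self abs_mult)
    also have "\<dots> \<le> D * (2 * \<eta>)"
      using uv[OF that] a[OF that] b[OF that] by (intro mult_mono) auto
    finally show ?thesis .
  qed
  then have "(\<Sum>e\<in>E. (u e - v e) * ((F a e - F u e) - (F b e - F v e))) \<le> real (card E) * (D * (2 * \<eta>))"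
    using sum_mono[where K = E and g = "\<lambda>_. D * (2 * \<eta>)"] by simp
  ultimately show ?thesis
    using F_dissipative[of u v] by (simp add: algebra_simps)
qed

end

locale euler_scheme = bounded_dissipative_field E F B for E :: "'e set" and F B +
  fixes x0 :: "'e \<Rightarrow> real"
begin

definition mesh :: "nat \<Rightarrow> real" where
  "mesh n = 1 / (real n + 1)"

definition cell :: "nat \<Rightarrow> real \<Rightarrow> nat" where
  "cell n t = nat \<lfloor>t * (real n + 1)\<rfloor>"

primrec euler_node :: "nat \<Rightarrow> nat \<Rightarrow> 'e \<Rightarrow> real" where
  "euler_node n 0 = x0"
| "euler_node n (Suc k) = (\<lambda>e. euler_node n k e + mesh n * F (euler_node n k) e)"

definition last_node :: "nat \<Rightarrow> real \<Rightarrow> 'e \<Rightarrow> real" where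
  "last_node n t = euler_node n (cell n t)"

definition euler :: "nat \<Rightarrow> real \<Rightarrow> 'e \<Rightarrow> real" where
  "euler n t e = last_node n t e + (t - real (cell n t) * mesh n) * F (last_node n t) e"

lemma mesh_pos: "0 < mesh n"
  by (simp add: mesh_def)

lemma cell_bounds:
  assumes "0 \<le> t"
  shows "real (cell n t) * mesh n \<le> t" "t < (real (cell n t) + 1) * mesh n"
proof -
  have "real (cell n t) = of_int \<lfloor>t * (real n + 1)\<rfloor>"
    using assms by (simp add: cell_def)
  then have "real (cell n t) \<le> t * (real n + 1)" "t * (real n + 1) < real (cell n t) + 1"
    by linarith+
  then show "real (cell n t) * mesh n \<le> t" "t < (real (cell n t) + 1) * mesh n"
    by (simp_all add: mesh_def field_simps)
qed

lemma cell_eqI: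
  assumes "real k * mesh n \<le> s" "s < (real k + 1) * mesh n"
  shows "cell n s = k"
proof -
  have "\<lfloor>s * (real n + 1)\<rfloor> = int k"
    using assms by (intro floor_unique) (simp_all add: mesh_def field_simps)
  then show ?thesis
    by (simp add: cell_def)
qed

lemma euler_0 [simp]: "euler n 0 e = x0 e"
  by (simp add: euler_def last_node_def cell_def)

lemma euler_node_dist: "e \<in> E \<Longrightarrow> \<bar>euler_node n k e - x0 e\<bar> \<le> B * (real k * mesh n)"
proof (induction k)
  case (Suc k)
  have "\<bar>mesh n * F (euler_node n k) e\<bar> \<le> mesh n * B"
    using F_bounded[OF Suc.prems] mesh_pos[of n] by (simp add: abs_mult)
  then show ?case
    using Suc by (simp add: algebra_simps)
qed simp

lemma last_node_dist:
  assumes "0 \<le> t" "e \<in> E"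
  shows "\<bar>last_node n t e - x0 e\<bar> \<le> B * t"
  using euler_node_dist[OF assms(2), of n "cell n t"] cell_bounds(1)[OF assms(1), of n] B_pos
  unfolding last_node_def by (meson mult_left_mono less_imp_le order_trans)

lemma euler_last_node_dist:
  assumes "0 \<le> t" "e \<in> E"
  shows "\<bar>euler n t e - last_node n t e\<bar> \<le> B * mesh n"
proof -
  have "0 \<le> t - real (cell n t) * mesh n" "t - real (cell n t) * mesh n \<le> mesh n"
    using cell_bounds[OF assms(1), of n] by (simp_all add: algebra_simps)
  then have "\<bar>(t - real (cell n t) * mesh n) * F (last_node n t) e\<bar> \<le> mesh n * B"
    unfolding abs_mult using F_bounded[OF assms(2)] by (intro mult_mono) auto
  then show ?thesis
    by (simp add: euler_def mult.commute)
qed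

lemma last_node_has_integral_cells:
  "((\<lambda>s. F (last_node n s) e) has_integral (euler_node n k e - x0 e)) {0..real k * mesh n}"
proof (induction k)
  case 0
  show ?case
    using has_integral_refl(2)[of "\<lambda>s. F (last_node n s) e" 0] by simp
next
  case (Suc k)
  have const: "((\<lambda>_. F (euler_node n k) e) has_integral (mesh n * F (euler_node n k) e))
          {real k * mesh n..real (Suc k) * mesh n}"
    using has_integral_const_real[of "F (euler_node n k) e" "real k * mesh n" "real (Suc k) * mesh n"]
      mesh_pos[of n] by (simp add: algebra_simps)
  have "((\<lambda>s. F (last_node n s) e) has_integral (mesh n * F (euler_node n k) e))
          {real k * mesh n..real (Suc k) * mesh n}"
  proof (rule has_integral_spike_finite[OF _ _ const])
    show "F (last_node n s) e = F (euler_node n k) e"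
      if "s \<in> {real k * mesh n..real (Suc k) * mesh n} - {real (Suc k) * mesh n}" for s
      using that cell_eqI[of k n s] by (auto simp: last_node_def algebra_simps)
  qed simp
  from has_integral_combine[OF _ _ Suc.IH this] show ?case
    using mesh_pos[of n] by (simp add: algebra_simps)
qed

lemma euler_has_integral:
  assumes "0 \<le> t"
  shows "((\<lambda>s. F (last_node n s) e) has_integral (euler n t e - x0 e)) {0..t}"
proof -
  let ?k = "cell n t"
  have const: "((\<lambda>_. F (last_node n t) e) has_integral ((t - real ?k * mesh n) * F (last_node n t) e))
          {real ?k * mesh n..t}"
    using has_integral_const_real[of "F (last_node n t) e" "real ?k * mesh n" t]
      cell_bounds[OF assms, of n] by simp
  have "((\<lambda>s. F (last_node n s) e) has_integral ((t - real ?k * mesh n) * F (last_node n t) e))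
          {real ?k * mesh n..t}"
  proof (rule has_integral_spike_finite[OF finite.emptyI _ const])
    show "F (last_node n s) e = F (last_node n t) e" if "s \<in> {real ?k * mesh n..t} - {}" for s
      using that cell_bounds[OF assms, of n] cell_eqI[of ?k n s] by (simp add: last_node_def)
  qed
  from has_integral_combine[OF _ _ last_node_has_integral_cells this]
  show ?thesis
    using cell_bounds[OF assms, of n] mesh_pos[of n] by (simp add: euler_def last_node_def algebra_simps)
qed

lemma continuous_on_euler: "continuous_on {0..T} (\<lambda>t. euler n t e)"
proof (cases "0 \<le> T")
  case True
  then have "(\<lambda>s. F (last_node n s) e) integrable_on {0..T}"
    using euler_has_integral by blast
  then have "continuous_on {0..T} (\<lambda>t. x0 e + integral {0..t} (\<lambda>s. F (last_node n s) e))"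
    by (intro continuous_on_add continuous_on_const indefinite_integral_continuous_1)
  then show ?thesis
    by (rule continuous_on_eq) (simp add: integral_unique[OF euler_has_integral])
qed simp

lemma euler_lipschitz:
  assumes "0 \<le> s" "s \<le> t" "e \<in> E"
  shows "\<bar>euler n t e - euler n s e\<bar> \<le> B * (t - s)"
proof -
  let ?g = "\<lambda>u. F (last_node n u) e"
  have "?g integrable_on {s..t}"
    using euler_has_integral[of t] assms by (rule_tac integrable_subinterval_real[of _ 0 t]) auto
  then obtain J where J: "(?g has_integral J) {s..t}"
    by blast
  have "(?g has_integral (euler n s e - x0 e + J)) {0..t}"
    by (rule has_integral_combine[OF assms(1,2) euler_has_integral[OF assms(1)] J])
  moreover have "(?g has_integral (euler n t e - x0 e)) {0..t}"
    using assms by (intro euler_has_integral) simp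
  ultimately have "euler n s e - x0 e + J = euler n t e - x0 e"
    by (rule has_integral_unique)
  then have "euler n t e - euler n s e = J"
    by simp
  moreover have "\<bar>J\<bar> \<le> B * (t - s)"
    using has_integral_bound_real[OF _ finite.emptyI J, of B] B_pos F_bounded[OF assms(3)] assms(2)
    by simp
  ultimately show ?thesis
    by simp
qed

lemma euler_has_derivative:
  assumes "0 \<le> t" "real (cell n t) * mesh n \<noteq> t"
  shows "((\<lambda>s. euler n s e) has_real_derivative F (last_node n t) e) (at t)"
proof -
  let ?k = "cell n t"
  let ?U = "{real ?k * mesh n<..<(real ?k + 1) * mesh n}"
  have "((\<lambda>s. last_node n t e + (s - real ?k * mesh n) * F (last_node n t) e)
          has_real_derivative F (last_node n t) e) (at t)"
    by (auto intro!: derivative_eq_intros)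
  moreover have "open ?U"
    by simp
  moreover have "t \<in> ?U"
    using cell_bounds[OF assms(1), of n] assms(2) by auto
  moreover have "last_node n t e + (s - real ?k * mesh n) * F (last_node n t) e = euler n s e"
    if "s \<in> ?U" for s
    using that cell_eqI[of ?k n s] by (simp add: euler_def last_node_def)
  ultimately show ?thesis
    by (rule has_field_derivative_transform_within_open)
qed

lemma finite_grid: "finite {t \<in> {0..T}. real (cell n t) * mesh n = t}"
proof (rule finite_subset)
  show "{t \<in> {0..T}. real (cell n t) * mesh n = t} \<subseteq> (\<lambda>k. real k * mesh n) ` {..cell n T}"
  proof
    fix t assume t: "t \<in> {t \<in> {0..T}. real (cell n t) * mesh n = t}"
    then have "cell n t \<le> cell n T"
      unfolding cell_def by (auto intro!: nat_mono floor_mono mult_right_mono)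
    then show "t \<in> (\<lambda>k. real k * mesh n) ` {..cell n T}"
      using t by force
  qed
qed simp

lemma mesh_eventually_le:
  assumes "0 < \<delta>"
  obtains N where "\<And>n. N \<le> n \<Longrightarrow> B * mesh n \<le> \<delta>"
proof
  fix n assume "nat \<lceil>B / \<delta>\<rceil> \<le> n"
  then have "B / \<delta> \<le> real n + 1"
    by linarith
  then show "B * mesh n \<le> \<delta>"
    using assms by (simp add: mesh_def field_simps)
qed

definition radius :: "real \<Rightarrow> real" where
  "radius T = (\<Sum>e\<in>E. \<bar>x0 e\<bar>) + B * T"

lemma euler_dist_x0: "0 \<le> t \<Longrightarrow> e \<in> E \<Longrightarrow> \<bar>euler n t e - x0 e\<bar> \<le> B * t"
  using euler_lipschitz[of 0 t e n] by simp

lemma dist_x0_le_radius: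
  assumes "t \<in> {0..T}" "e \<in> E" "\<bar>z - x0 e\<bar> \<le> B * t"
  shows "\<bar>z\<bar> \<le> radius T"
proof -
  have "\<bar>x0 e\<bar> \<le> (\<Sum>e\<in>E. \<bar>x0 e\<bar>)"
    using member_le_sum[of e E "\<lambda>e. \<bar>x0 e\<bar>"] finite_E assms(2) by simp
  moreover have "B * t \<le> B * T"
    using assms(1) B_pos by simp
  ultimately show ?thesis
    using assms(3) unfolding radius_def by linarith
qed

lemma F_last_node_close:
  assumes "0 < \<eta>"
  obtains N where
    "\<And>n t e. N \<le> n \<Longrightarrow> t \<in> {0..T} \<Longrightarrow> e \<in> E \<Longrightarrow> \<bar>F (last_node n t) e - F (euler n t) e\<bar> \<le> \<eta>"
proof -
  obtain \<delta> where "0 < \<delta>" and \<delta>: "\<And>x y. \<forall>e\<in>E. \<bar>x e\<bar> \<le> radius T \<and> \<bar>y e\<bar> \<le> radius T \<and> \<bar>x e - y e\<bar> \<le> \<delta>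
      \<Longrightarrow> \<forall>e\<in>E. \<bar>F x e - F y e\<bar> \<le> \<eta>"
    using F_uniformly_continuous[OF assms, of "radius T"] by blast
  obtain N where N: "\<And>n. N \<le> n \<Longrightarrow> B * mesh n \<le> \<delta>"
    using mesh_eventually_le[OF \<open>0 < \<delta>\<close>] by blast
  show ?thesis
  proof (rule that)
    fix n t e assume "N \<le> n" "t \<in> {0..T}" "e \<in> E"
    have "\<forall>e\<in>E. \<bar>last_node n t e\<bar> \<le> radius T \<and> \<bar>euler n t e\<bar> \<le> radius T
                \<and> \<bar>last_node n t e - euler n t e\<bar> \<le> \<delta>"
      using \<open>t \<in> {0..T}\<close> N[OF \<open>N \<le> n\<close>] euler_last_node_dist[of t _ n]
        dist_x0_le_radius[OF _ _ last_node_dist] dist_x0_le_radius[OF _ _ euler_dist_x0]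
      by (force simp: abs_minus_commute)
    then show "\<bar>F (last_node n t) e - F (euler n t) e\<bar> \<le> \<eta>"
      using \<delta> \<open>e \<in> E\<close> by blast
  qed
qed

text \<open>Dissipativity leaves only the deviation of F at the nodes from F on the polygons in the
  derivative of the squared distance between two Euler polygons.\<close>
lemma euler_sq_dist_le:
  assumes close: "\<And>k t e. k \<in> {n, m} \<Longrightarrow> t \<in> {0..T} \<Longrightarrow> e \<in> E \<Longrightarrow>
                    \<bar>F (last_node k t) e - F (euler k t) e\<bar> \<le> \<eta>"
    and t0: "t0 \<in> {0..T}"
  shows "(\<Sum>e\<in>E. (euler n t0 e - euler m t0 e)\<^sup>2) \<le> 4 * real (card E) * (2 * B * T) * \<eta> * t0"
proof -
  define \<phi> where "\<phi> t = (\<Sum>e\<in>E. (euler n t e - euler m t e)\<^sup>2)" for t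
  define \<phi>' where "\<phi>' t = (\<Sum>e\<in>E. 2 * (euler n t e - euler m t e) * (F (last_node n t) e - F (last_node m t) e))"
    for t
  define S where "S = {t \<in> {0..t0}. real (cell n t) * mesh n = t} \<union> {t \<in> {0..t0}. real (cell m t) * mesh m = t}"
  have "\<phi> t0 - \<phi> 0 \<le> (4 * real (card E) * (2 * B * T) * \<eta>) * (t0 - 0)"
  proof (rule le_by_deriv_bound_off_finite[where S = S and \<phi>' = \<phi>'])
    show "finite S"
      using finite_grid by (simp add: S_def)
    show "continuous_on {0..t0} \<phi>"
      unfolding \<phi>_def by (intro continuous_intros continuous_on_euler)
    fix t assume t: "t \<in> {0<..<t0} - S"
    then have "real (cell n t) * mesh n \<noteq> t" "real (cell m t) * mesh m \<noteq> t"
      by (auto simp: S_def)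
    then show "(\<phi> has_real_derivative \<phi>' t) (at t)"
      unfolding \<phi>_def[abs_def] \<phi>'_def using t
      by (intro DERIV_sum) (auto intro!: derivative_eq_intros euler_has_derivative)
    have "t \<in> {0..T}"
      using t t0 by auto
    then show "\<phi>' t \<le> 4 * real (card E) * (2 * B * T) * \<eta>"
      unfolding \<phi>'_def
    proof (intro dissipative_perturbed)
      have "B * t \<le> B * T"
        using \<open>t \<in> {0..T}\<close> B_pos by simp
      then show "\<bar>euler n t e - euler m t e\<bar> \<le> 2 * B * T" if "e \<in> E" for e
        using euler_dist_x0[of t e n] euler_dist_x0[of t e m] \<open>t \<in> {0..T}\<close> that
        by (simp add: abs_le_iff)
    qed (use close in auto)
  qed (use t0 in auto)
  then show ?thesis
    by (simp add: \<phi>_def)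
qed

lemma euler_uniformly_Cauchy:
  assumes "0 < \<epsilon>"
  obtains N where "\<And>n m t e. N \<le> n \<Longrightarrow> N \<le> m \<Longrightarrow> t \<in> {0..T} \<Longrightarrow> e \<in> E \<Longrightarrow>
                     \<bar>euler n t e - euler m t e\<bar> \<le> \<epsilon>"
proof -
  define C where "C = 8 * real (card E) * B * T\<^sup>2"
  define \<eta> where "\<eta> = \<epsilon>\<^sup>2 / (C + 1)"
  have "0 \<le> C"
    using B_pos by (simp add: C_def)
  then have "0 < \<eta>"
    using assms by (simp add: \<eta>_def)
  then obtain N where N: "\<And>n t e. N \<le> n \<Longrightarrow> t \<in> {0..T} \<Longrightarrow> e \<in> E \<Longrightarrow>
                            \<bar>F (last_node n t) e - F (euler n t) e\<bar> \<le> \<eta>"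
    using F_last_node_close[where T = T] by blast
  show ?thesis
  proof (rule that)
    fix n m t e assume "N \<le> n" "N \<le> m" "t \<in> {0..T}" "e \<in> E"
    have "(euler n t e - euler m t e)\<^sup>2 \<le> (\<Sum>e\<in>E. (euler n t e - euler m t e)\<^sup>2)"
      by (rule sq_le_sum_sq) fact
    also have "\<dots> \<le> 4 * real (card E) * (2 * B * T) * \<eta> * t"
      using N \<open>N \<le> n\<close> \<open>N \<le> m\<close> \<open>t \<in> {0..T}\<close> by (intro euler_sq_dist_le) auto
    also have "\<dots> \<le> 4 * real (card E) * (2 * B * T) * \<eta> * T"
      using \<open>t \<in> {0..T}\<close> \<open>0 < \<eta>\<close> B_pos by (intro mult_left_mono) auto
    also have "\<dots> = C * \<eta>"
      by (simp add: C_def power2_eq_square)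
    also have "\<dots> \<le> \<epsilon>\<^sup>2"
      using \<open>0 \<le> C\<close> assms by (simp add: \<eta>_def field_simps)
    finally show "\<bar>euler n t e - euler m t e\<bar> \<le> \<epsilon>"
      using power2_le_imp_le[of "\<bar>euler n t e - euler m t e\<bar>" \<epsilon>] assms by simp
  qed
qed

definition euler_limit :: "real \<Rightarrow> 'e \<Rightarrow> real" where
  "euler_limit t e = lim (\<lambda>n. euler n t e)"

lemma euler_converges:
  assumes "0 \<le> t" "e \<in> E"
  shows "(\<lambda>n. euler n t e) \<longlonglongrightarrow> euler_limit t e"
proof -
  have "Cauchy (\<lambda>n. euler n t e)"
  proof (rule metric_CauchyI)
    fix \<epsilon> :: real assume "0 < \<epsilon>"
    then obtain N where N: "\<And>n m t' e'. N \<le> n \<Longrightarrow> N \<le> m \<Longrightarrow> t' \<in> {0..t} \<Longrightarrow> e' \<in> E \<Longrightarrow>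
                              \<bar>euler n t' e' - euler m t' e'\<bar> \<le> \<epsilon>/2"
      using euler_uniformly_Cauchy[of "\<epsilon>/2" t] by auto
    show "\<exists>M. \<forall>m\<ge>M. \<forall>n\<ge>M. dist (euler m t e) (euler n t e) < \<epsilon>"
      using N assms \<open>0 < \<epsilon>\<close> by (force simp: dist_real_def)
  qed
  then show ?thesis
    unfolding euler_limit_def by (simp add: Cauchy_convergent_iff convergent_LIMSEQ_iff)
qed

lemma euler_uniform_convergence:
  assumes "0 < \<epsilon>"
  obtains N where "\<And>n t e. N \<le> n \<Longrightarrow> t \<in> {0..T} \<Longrightarrow> e \<in> E \<Longrightarrow> \<bar>euler n t e - euler_limit t e\<bar> \<le> \<epsilon>"
proof -
  obtain N where N: "\<And>n m t e. N \<le> n \<Longrightarrow> N \<le> m \<Longrightarrow> t \<in> {0..T} \<Longrightarrow> e \<in> E \<Longrightarrow>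
                       \<bar>euler n t e - euler m t e\<bar> \<le> \<epsilon>"
    using euler_uniformly_Cauchy[OF assms, of T] by blast
  show ?thesis
  proof (rule that)
    fix n t e assume "N \<le> n" "t \<in> {0..T}" "e \<in> E"
    then have "(\<lambda>m. \<bar>euler n t e - euler m t e\<bar>) \<longlonglongrightarrow> \<bar>euler n t e - euler_limit t e\<bar>"
      using euler_converges[of t e] by (intro tendsto_intros) auto
    then show "\<bar>euler n t e - euler_limit t e\<bar> \<le> \<epsilon>"
      by (rule LIMSEQ_le_const2) (use N \<open>N \<le> n\<close> \<open>t \<in> {0..T}\<close> \<open>e \<in> E\<close> in blast)
  qed
qed

lemma euler_limit_0: "e \<in> E \<Longrightarrow> euler_limit 0 e = x0 e"
  using euler_converges[of 0 e] by (simp add: LIMSEQ_const_iff)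

lemma euler_limit_lipschitz:
  assumes "0 \<le> s" "s \<le> t" "e \<in> E"
  shows "\<bar>euler_limit t e - euler_limit s e\<bar> \<le> B * (t - s)"
proof -
  have "(\<lambda>n. \<bar>euler n t e - euler n s e\<bar>) \<longlonglongrightarrow> \<bar>euler_limit t e - euler_limit s e\<bar>"
    using euler_converges[of t e] euler_converges[of s e] assms by (intro tendsto_intros) auto
  then show ?thesis
    by (rule LIMSEQ_le_const2) (use euler_lipschitz assms in auto)
qed

lemma euler_limit_le_radius: "t \<in> {0..T} \<Longrightarrow> e \<in> E \<Longrightarrow> \<bar>euler_limit t e\<bar> \<le> radius T"
  using euler_limit_lipschitz[of 0 t e] euler_limit_0[of e] by (intro dist_x0_le_radius) auto

lemma continuous_on_F_euler_limit:
  assumes "e \<in> E"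
  shows "continuous_on {0..T} (\<lambda>s. F (euler_limit s) e)"
  unfolding continuous_on_iff
proof (intro ballI allI impI)
  fix s \<epsilon> :: real assume "s \<in> {0..T}" "0 < \<epsilon>"
  then obtain \<delta> where "0 < \<delta>" and \<delta>: "\<And>x y. \<forall>e\<in>E. \<bar>x e\<bar> \<le> radius T \<and> \<bar>y e\<bar> \<le> radius T \<and> \<bar>x e - y e\<bar> \<le> \<delta>
      \<Longrightarrow> \<forall>e\<in>E. \<bar>F x e - F y e\<bar> \<le> \<epsilon>/2"
    using F_uniformly_continuous[of "\<epsilon>/2" "radius T"] by auto
  have "\<bar>F (euler_limit s') e - F (euler_limit s) e\<bar> \<le> \<epsilon>/2" if "s' \<in> {0..T}" "\<bar>s' - s\<bar> < \<delta>/B" for s'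
  proof -
    have "\<bar>euler_limit s' e' - euler_limit s e'\<bar> \<le> B * \<bar>s' - s\<bar>" if "e' \<in> E" for e'
      using euler_limit_lipschitz[of s s' e'] euler_limit_lipschitz[of s' s e'] \<open>s \<in> {0..T}\<close>
        \<open>s' \<in> {0..T}\<close> that by (cases "s \<le> s'") (auto simp: abs_minus_commute)
    moreover have "B * \<bar>s' - s\<bar> \<le> \<delta>"
      using that(2) B_pos by (simp add: field_simps)
    ultimately show ?thesis
      using \<delta>[of "euler_limit s'" "euler_limit s"] euler_limit_le_radius \<open>s \<in> {0..T}\<close> that(1) assms
      by force
  qed
  then show "\<exists>d>0. \<forall>s'\<in>{0..T}. dist s' s < d \<longrightarrow> dist (F (euler_limit s') e) (F (euler_limit s) e) < \<epsilon>"
    using \<open>0 < \<delta>\<close> \<open>0 < \<epsilon>\<close> B_pos by (intro exI[of _ "\<delta>/B"]) (force simp: dist_real_def)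
qed

lemma F_last_node_uniform_convergence:
  assumes "0 < \<epsilon>"
  obtains N where "\<And>n s e. N \<le> n \<Longrightarrow> s \<in> {0..T} \<Longrightarrow> e \<in> E \<Longrightarrow>
                     \<bar>F (last_node n s) e - F (euler_limit s) e\<bar> \<le> \<epsilon>"
proof -
  obtain \<delta> where "0 < \<delta>" and \<delta>: "\<And>x y. \<forall>e\<in>E. \<bar>x e\<bar> \<le> radius T \<and> \<bar>y e\<bar> \<le> radius T \<and> \<bar>x e - y e\<bar> \<le> \<delta>
      \<Longrightarrow> \<forall>e\<in>E. \<bar>F x e - F y e\<bar> \<le> \<epsilon>"
    using F_uniformly_continuous[OF assms, of "radius T"] by blast
  obtain N1 where N1: "\<And>n. N1 \<le> n \<Longrightarrow> B * mesh n \<le> \<delta>/2"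
    using mesh_eventually_le[of "\<delta>/2"] \<open>0 < \<delta>\<close> by auto
  obtain N2 where N2: "\<And>n s e. N2 \<le> n \<Longrightarrow> s \<in> {0..T} \<Longrightarrow> e \<in> E \<Longrightarrow> \<bar>euler n s e - euler_limit s e\<bar> \<le> \<delta>/2"
    using euler_uniform_convergence[of "\<delta>/2" T] \<open>0 < \<delta>\<close> by auto
  show ?thesis
  proof (rule that)
    fix n s e assume n: "max N1 N2 \<le> n" and "s \<in> {0..T}" "e \<in> E"
    have "\<bar>last_node n s e'\<bar> \<le> radius T \<and> \<bar>euler_limit s e'\<bar> \<le> radius T
            \<and> \<bar>last_node n s e' - euler_limit s e'\<bar> \<le> \<delta>" if "e' \<in> E" for e'
    proof (intro conjI)
      show "\<bar>last_node n s e'\<bar> \<le> radius T"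
        using \<open>s \<in> {0..T}\<close> that by (intro dist_x0_le_radius[OF _ _ last_node_dist]) auto
      show "\<bar>euler_limit s e'\<bar> \<le> radius T"
        using euler_limit_le_radius \<open>s \<in> {0..T}\<close> that by blast
      have "\<bar>euler n s e' - last_node n s e'\<bar> \<le> \<delta>/2"
        using euler_last_node_dist[of s e' n] N1[of n] n \<open>s \<in> {0..T}\<close> that by simp
      moreover have "\<bar>euler n s e' - euler_limit s e'\<bar> \<le> \<delta>/2"
        using N2[of n s e'] n \<open>s \<in> {0..T}\<close> that by simp
      ultimately show "\<bar>last_node n s e' - euler_limit s e'\<bar> \<le> \<delta>"
        by linarith
    qed
    then show "\<bar>F (last_node n s) e - F (euler_limit s) e\<bar> \<le> \<epsilon>"
      using \<delta> \<open>e \<in> E\<close> by blast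
  qed
qed

lemma euler_limit_integral_eq:
  assumes "0 \<le> t" "e \<in> E"
  shows "euler_limit t e = x0 e + integral {0..t} (\<lambda>s. F (euler_limit s) e)"
proof -
  let ?f = "\<lambda>s. F (euler_limit s) e"
  have f: "(?f has_integral integral {0..t} ?f) {0..t}"
    using continuous_on_F_euler_limit[OF assms(2)] by (intro integrable_integral integrable_continuous_real)
  have "(\<lambda>n. euler n t e) \<longlonglongrightarrow> x0 e + integral {0..t} ?f"
  proof (rule LIMSEQ_I)
    fix r :: real assume "0 < r"
    then have "0 < r / (2 * (t + 1))"
      using assms(1) by simp
    then obtain N where N: "\<And>n s e. N \<le> n \<Longrightarrow> s \<in> {0..t} \<Longrightarrow> e \<in> E \<Longrightarrow>
                              \<bar>F (last_node n s) e - F (euler_limit s) e\<bar> \<le> r / (2 * (t + 1))"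
      using F_last_node_uniform_convergence[where T = t] by blast
    have "norm (euler n t e - (x0 e + integral {0..t} ?f)) < r" if "N \<le> n" for n
    proof -
      have diff: "((\<lambda>s. F (last_node n s) e - ?f s) has_integral (euler n t e - x0 e - integral {0..t} ?f))
                    {0..t}"
        by (rule has_integral_diff[OF euler_has_integral[OF assms(1)] f])
      have close: "norm (F (last_node n s) e - ?f s) \<le> r / (2 * (t + 1))" if "s \<in> {0..t} - {}" for s
        using N[OF \<open>N \<le> n\<close> _ assms(2)] that by simp
      have "\<bar>euler n t e - x0 e - integral {0..t} ?f\<bar> \<le> r / (2 * (t + 1)) * t"
        using has_integral_bound_real[OF _ finite.emptyI diff close] \<open>0 < r\<close> assms(1) by simp
      also have "\<dots> < r"
        using \<open>0 < r\<close> assms(1) by (simp add: field_simps add_nonneg_pos)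
      finally show ?thesis
        by (simp add: algebra_simps)
    qed
    then show "\<exists>no. \<forall>n\<ge>no. norm (euler n t e - (x0 e + integral {0..t} ?f)) < r"
      by blast
  qed
  then show ?thesis
    using euler_converges[OF assms] LIMSEQ_unique by blast
qed

lemma euler_limit_has_derivative:
  assumes "0 \<le> t" "e \<in> E"
  shows "((\<lambda>s. euler_limit s e) has_real_derivative F (euler_limit t) e) (at t within {0..})"
proof -
  let ?f = "\<lambda>s. F (euler_limit s) e"
  have "((\<lambda>u. x0 e + integral {0..u} ?f) has_real_derivative ?f t) (at t within {0..t + 1})"
    using integral_has_real_derivative[OF continuous_on_F_euler_limit[OF assms(2)], of t] assms(1)
    by (auto intro!: derivative_eq_intros)
  then have "((\<lambda>s. euler_limit s e) has_real_derivative ?f t) (at t within {0..t + 1})"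
    by (rule has_field_derivative_transform_within[OF _ zero_less_one])
       (use assms euler_limit_integral_eq in auto)
  moreover have "at t within {0..} = at t within {0..t + 1}"
    by (rule at_within_nhd[of _ "{..<t + 1}"]) auto
  ultimately show ?thesis
    by simp
qed

theorem ivp_solution_euler_limit: "ivp_solution E F x0 euler_limit"
  unfolding ivp_solution_def using euler_limit_0 euler_limit_has_derivative by blast

theorem ex_unique_ivp_solution:
  "\<exists>x. ivp_solution E F x0 x \<and> (\<forall>y. ivp_solution E F x0 y \<longrightarrow> (\<forall>t\<ge>0. \<forall>e\<in>E. y t e = x t e))"
  using ivp_solution_euler_limit ivp_solution_unique by blast

end

section \<open>Tetrahedra and curvature\<close>

type_synonym 'a gluing = "'a \<times> nat \<Rightarrow> ('a \<times> nat \<times> (nat \<Rightarrow> nat)) option"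

abbreviation tet_pairs :: "nat set set" where
  "tet_pairs \<equiv> {{0,1}, {0,2}, {0,3}, {1,2}, {1,3}, {2,3}}"

lemma pairs_less_4_eq: "{{i, j} | i j :: nat. i < 4 \<and> j < 4 \<and> i \<noteq> j} = tet_pairs"
proof
  have mem_tet_pairs: "{i, j} \<in> tet_pairs" if "i < 4" "j < 4" "i \<noteq> j" for i j :: nat
  proof -
    have "i \<in> {0,1,2,3}" "j \<in> {0,1,2,3}"
      using that by auto
    then show ?thesis
      using that(3) by (elim insertE emptyE) (simp_all add: doubleton_eq_iff)
  qed
  show "{{i, j} | i j :: nat. i < 4 \<and> j < 4 \<and> i \<noteq> j} \<subseteq> tet_pairs"
  proof
    fix p assume "p \<in> {{i, j} | i j :: nat. i < 4 \<and> j < 4 \<and> i \<noteq> j}"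
    then obtain i j :: nat where "p = {i, j}" "i < 4" "j < 4" "i \<noteq> j"
      by blast
    then show "p \<in> tet_pairs"
      using mem_tet_pairs by simp
  qed
  have "{i, j} \<in> {{i, j} | i j :: nat. i < 4 \<and> j < 4 \<and> i \<noteq> j}" if "i < 4" "j < 4" "i \<noteq> j" for i j :: nat
    using that by blast
  then show "tet_pairs \<subseteq> {{i, j} | i j :: nat. i < 4 \<and> j < 4 \<and> i \<noteq> j}"
    by simp
qed

lemma tet_edges_eq: "tet_edges T = T \<times> tet_pairs"
  unfolding tet_edges_def pairs_less_4_eq[symmetric] by blast

lemma edges_eq_image: "edges T glue = edge_class T glue ` tet_edges T"
  unfolding edges_def quotient_def edge_class_def by auto

lemma finite_tet_edges: "finite T \<Longrightarrow> finite (tet_edges T)"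
  by (simp add: tet_edges_eq)

lemma finite_edges: "finite T \<Longrightarrow> finite (edges T glue)"
  by (simp add: edges_eq_image finite_tet_edges)

lemma edge_class_in_edges: "\<sigma> \<in> T \<Longrightarrow> p \<in> tet_pairs \<Longrightarrow> edge_class T glue (\<sigma>, p) \<in> edges T glue"
  unfolding edges_eq_image tet_edges_eq by blast

lemma sum_tet_pairs:
  "(\<Sum>p\<in>tet_pairs. f p) = f {0,1} + f {0,2} + f {0,3} + f {1,2} + f {1,3} + f {2,3}"
  by (simp add: doubleton_eq_iff add.assoc)

lemma ext_dihedral_eq_log_angle:
  assumes "{..<4} - {i, j} = {k, h}" "k < h"
  shows "ext_dihedral L i j = log_angle (L {i,j} + L {k,h}) (L {i,k} + L {j,h}) (L {i,h} + L {j,k})"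
  using assms by (simp add: ext_dihedral_def log_angle_def Let_def)

lemma lessThan_4_minus_pair:
  "{..<4} - {0, 1} = {2, 3::nat}" "{..<4} - {2, 3} = {0, 1::nat}"
  "{..<4} - {0, 2} = {1, 3::nat}" "{..<4} - {1, 3} = {0, 2::nat}"
  "{..<4} - {0, 3} = {1, 2::nat}" "{..<4} - {1, 2} = {0, 3::nat}"
  by auto

lemma ext_dihedral_tetrahedron:
  fixes L :: "nat set \<Rightarrow> real"
  defines "s1 \<equiv> L {0,1} + L {2,3}" and "s2 \<equiv> L {0,2} + L {1,3}" and "s3 \<equiv> L {0,3} + L {1,2}"
  shows "ext_dihedral L 0 1 = log_angle s1 s2 s3" "ext_dihedral L 2 3 = log_angle s1 s2 s3"
    "ext_dihedral L 0 2 = log_angle s2 s1 s3" "ext_dihedral L 1 3 = log_angle s2 s1 s3"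
    "ext_dihedral L 0 3 = log_angle s3 s1 s2" "ext_dihedral L 1 2 = log_angle s3 s1 s2"
  using lessThan_4_minus_pair[THEN ext_dihedral_eq_log_angle, of L]
  unfolding s1_def s2_def s3_def by (simp_all add: insert_commute add.commute)

lemma ext_dihedral_bounds: "0 \<le> ext_dihedral L i j" "ext_dihedral L i j \<le> pi"
  unfolding ext_dihedral_def Let_def by (simp_all add: gen_angle_bounds)

lemma Min_Max_tet_pairs:
  "Min {0,1::nat} = 0" "Max {0,1::nat} = 1" "Min {0,2::nat} = 0" "Max {0,2::nat} = 2"
  "Min {0,3::nat} = 0" "Max {0,3::nat} = 3" "Min {1,2::nat} = 1" "Max {1,2::nat} = 2"
  "Min {1,3::nat} = 1" "Max {1,3::nat} = 3" "Min {2,3::nat} = 2" "Max {2,3::nat} = 3"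
  by simp_all

theorem tetrahedron_angles_monotone:
  fixes L L' :: "nat set \<Rightarrow> real"
  shows "0 \<le> (\<Sum>p\<in>tet_pairs. (ext_dihedral L (Min p) (Max p) - ext_dihedral L' (Min p) (Max p)) * (L p - L' p))"
proof -
  define s1 s2 s3 where "s1 = L {0,1} + L {2,3}" and "s2 = L {0,2} + L {1,3}" and "s3 = L {0,3} + L {1,2}"
  define t1 t2 t3 where "t1 = L' {0,1} + L' {2,3}" and "t2 = L' {0,2} + L' {1,3}" and "t3 = L' {0,3} + L' {1,2}"
  have "(\<Sum>p\<in>tet_pairs. (ext_dihedral L (Min p) (Max p) - ext_dihedral L' (Min p) (Max p)) * (L p - L' p))
      = angle_action s1 s2 s3 (s1 - t1) (s2 - t2) (s3 - t3) - angle_action t1 t2 t3 (s1 - t1) (s2 - t2) (s3 - t3)"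
    unfolding sum_tet_pairs Min_Max_tet_pairs ext_dihedral_tetrahedron angle_action_def
      s1_def s2_def s3_def t1_def t2_def t3_def
    by (simp add: algebra_simps)
  then show ?thesis
    using angle_action_monotone[of t1 t2 t3 s1 s2 s3] by simp
qed

definition edge_angle :: "'a set \<Rightarrow> 'a gluing \<Rightarrow> (('a \<times> nat set) set \<Rightarrow> real) \<Rightarrow> 'a \<times> nat set \<Rightarrow> real" where
  "edge_angle T glue l = (\<lambda>(\<sigma>, p). ext_dihedral (\<lambda>q. l (edge_class T glue (\<sigma>, q))) (Min p) (Max p))"

lemma gen_curv_eq:
  "gen_curv T glue l e = 2 * pi - sum (edge_angle T glue l) {z \<in> tet_edges T. edge_class T glue z = e}"
  by (simp add: gen_curv_def edge_angle_def)

lemma edge_angle_bounds: "0 \<le> edge_angle T glue l z" "edge_angle T glue l z \<le> pi"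
  by (simp_all add: edge_angle_def case_prod_unfold ext_dihedral_bounds)

lemma gen_curv_bounded:
  assumes "finite T"
  shows "\<bar>gen_curv T glue l e\<bar> \<le> 2 * pi + pi * real (card (tet_edges T))"
proof -
  let ?S = "{z \<in> tet_edges T. edge_class T glue z = e}"
  have "sum (edge_angle T glue l) ?S \<le> sum (\<lambda>_. pi) ?S"
    by (rule sum_mono) (rule edge_angle_bounds)
  also have "\<dots> = pi * real (card ?S)"
    by simp
  also have "\<dots> \<le> pi * real (card (tet_edges T))"
    using card_mono[OF finite_tet_edges[OF assms], of ?S] by simp
  finally have "sum (edge_angle T glue l) ?S \<le> pi * real (card (tet_edges T))" .
  moreover have "0 \<le> sum (edge_angle T glue l) ?S"
    by (rule sum_nonneg) (rule edge_angle_bounds)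
  ultimately show ?thesis
    unfolding gen_curv_eq using pi_gt_zero by arith
qed

lemma ext_dihedral_uniformly_continuous:
  assumes "0 < \<epsilon>"
  obtains \<delta> where "0 < \<delta>"
    "\<And>L L' p. (\<And>q. q \<in> tet_pairs \<Longrightarrow> \<bar>L q\<bar> \<le> R \<and> \<bar>L' q\<bar> \<le> R \<and> \<bar>L q - L' q\<bar> \<le> \<delta>) \<Longrightarrow> p \<in> tet_pairs \<Longrightarrow>
       \<bar>ext_dihedral L (Min p) (Max p) - ext_dihedral L' (Min p) (Max p)\<bar> \<le> \<epsilon>"
proof -
  obtain \<delta> where "0 < \<delta>" and \<delta>: "\<And>a b c a' b' c'.
      \<bar>a\<bar> \<le> 2*R \<Longrightarrow> \<bar>b\<bar> \<le> 2*R \<Longrightarrow> \<bar>c\<bar> \<le> 2*R \<Longrightarrow> \<bar>a'\<bar> \<le> 2*R \<Longrightarrow> \<bar>b'\<bar> \<le> 2*R \<Longrightarrow> \<bar>c'\<bar> \<le> 2*R \<Longrightarrow>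
      \<bar>a - a'\<bar> \<le> \<delta> \<Longrightarrow> \<bar>b - b'\<bar> \<le> \<delta> \<Longrightarrow> \<bar>c - c'\<bar> \<le> \<delta> \<Longrightarrow> \<bar>log_angle a b c - log_angle a' b' c'\<bar> \<le> \<epsilon>"
    using log_angle_uniformly_continuous_cube[OF assms, of "2*R"] by blast
  show ?thesis
  proof (rule that[of "\<delta>/2"])
    fix L L' :: "nat set \<Rightarrow> real" and p
    assume H: "\<And>q. q \<in> tet_pairs \<Longrightarrow> \<bar>L q\<bar> \<le> R \<and> \<bar>L' q\<bar> \<le> R \<and> \<bar>L q - L' q\<bar> \<le> \<delta>/2"
      and "p \<in> tet_pairs"
    have sum_close: "\<bar>L a + L b\<bar> \<le> 2*R" "\<bar>L' a + L' b\<bar> \<le> 2*R" "\<bar>(L a + L b) - (L' a + L' b)\<bar> \<le> \<delta>"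
      if "a \<in> tet_pairs" "b \<in> tet_pairs" for a b
      using H[OF that(1)] H[OF that(2)] by arith+
    have close: "\<bar>log_angle (L a + L a') (L b + L b') (L c + L c')
                  - log_angle (L' a + L' a') (L' b + L' b') (L' c + L' c')\<bar> \<le> \<epsilon>"
      if "a \<in> tet_pairs" "a' \<in> tet_pairs" "b \<in> tet_pairs" "b' \<in> tet_pairs" "c \<in> tet_pairs" "c' \<in> tet_pairs"
      for a a' b b' c c'
    proof -
      note a = sum_close[OF that(1,2)] and b = sum_close[OF that(3,4)] and c = sum_close[OF that(5,6)]
      show ?thesis
        by (rule \<delta>[OF a(1) b(1) c(1) a(2) b(2) c(2) a(3) b(3) c(3)])
    qed
    from \<open>p \<in> tet_pairs\<close> show "\<bar>ext_dihedral L (Min p) (Max p) - ext_dihedral L' (Min p) (Max p)\<bar> \<le> \<epsilon>"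
      by (elim insertE emptyE; simp only: Min_Max_tet_pairs ext_dihedral_tetrahedron; intro close; simp)
  qed (use \<open>0 < \<delta>\<close> in simp)
qed

lemma edge_angle_uniformly_continuous:
  assumes "0 < \<epsilon>"
  obtains \<delta> where "0 < \<delta>"
    "\<And>x y z. \<forall>e\<in>edges T glue. \<bar>x e\<bar> \<le> R \<and> \<bar>y e\<bar> \<le> R \<and> \<bar>x e - y e\<bar> \<le> \<delta> \<Longrightarrow> z \<in> tet_edges T \<Longrightarrow>
       \<bar>edge_angle T glue x z - edge_angle T glue y z\<bar> \<le> \<epsilon>"
proof -
  obtain \<delta> where "0 < \<delta>" and \<delta>: "\<And>L L' p. (\<And>q. q \<in> tet_pairs \<Longrightarrow> \<bar>L q\<bar> \<le> R \<and> \<bar>L' q\<bar> \<le> R \<and> \<bar>L q - L' q\<bar> \<le> \<delta>)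
      \<Longrightarrow> p \<in> tet_pairs \<Longrightarrow> \<bar>ext_dihedral L (Min p) (Max p) - ext_dihedral L' (Min p) (Max p)\<bar> \<le> \<epsilon>"
    using ext_dihedral_uniformly_continuous[OF assms, where R = R] by blast
  show ?thesis
  proof (rule that[OF \<open>0 < \<delta>\<close>])
    fix x y z assume H: "\<forall>e\<in>edges T glue. \<bar>x e\<bar> \<le> R \<and> \<bar>y e\<bar> \<le> R \<and> \<bar>x e - y e\<bar> \<le> \<delta>"
      and "z \<in> tet_edges T"
    obtain \<sigma> p where z: "z = (\<sigma>, p)"
      by (cases z)
    with \<open>z \<in> tet_edges T\<close> have "\<sigma> \<in> T \<and> p \<in> tet_pairs"
      by (simp only: tet_edges_eq mem_Sigma_iff)
    then have "\<sigma> \<in> T" "p \<in> tet_pairs"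
      by simp_all
    have "\<bar>x (edge_class T glue (\<sigma>, q))\<bar> \<le> R \<and> \<bar>y (edge_class T glue (\<sigma>, q))\<bar> \<le> R
            \<and> \<bar>x (edge_class T glue (\<sigma>, q)) - y (edge_class T glue (\<sigma>, q))\<bar> \<le> \<delta>" if "q \<in> tet_pairs" for q
      by (rule bspec[OF H edge_class_in_edges[OF \<open>\<sigma> \<in> T\<close> that]])
    from \<delta>[OF this \<open>p \<in> tet_pairs\<close>] show "\<bar>edge_angle T glue x z - edge_angle T glue y z\<bar> \<le> \<epsilon>"
      unfolding edge_angle_def z by simp
  qed
qed

lemma gen_curv_uniformly_continuous:
  assumes "finite T" "0 < \<epsilon>"
  shows "\<exists>\<delta>>0. \<forall>x y. (\<forall>e\<in>edges T glue. \<bar>x e\<bar> \<le> R \<and> \<bar>y e\<bar> \<le> R \<and> \<bar>x e - y e\<bar> \<le> \<delta>)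
           \<longrightarrow> (\<forall>e\<in>edges T glue. \<bar>gen_curv T glue x e - gen_curv T glue y e\<bar> \<le> \<epsilon>)"
proof -
  define N where "N = real (card (tet_edges T))"
  have "0 < \<epsilon> / (N + 1)"
    using assms(2) by (simp add: N_def)
  then obtain \<delta> where "0 < \<delta>" and \<delta>: "\<And>x y z. \<forall>e\<in>edges T glue. \<bar>x e\<bar> \<le> R \<and> \<bar>y e\<bar> \<le> R \<and> \<bar>x e - y e\<bar> \<le> \<delta>
      \<Longrightarrow> z \<in> tet_edges T \<Longrightarrow> \<bar>edge_angle T glue x z - edge_angle T glue y z\<bar> \<le> \<epsilon> / (N + 1)"
    using edge_angle_uniformly_continuous[where R = R and T = T and glue = glue] by blast
  have "\<bar>gen_curv T glue x e - gen_curv T glue y e\<bar> \<le> \<epsilon>"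
    if H: "\<forall>e\<in>edges T glue. \<bar>x e\<bar> \<le> R \<and> \<bar>y e\<bar> \<le> R \<and> \<bar>x e - y e\<bar> \<le> \<delta>" for x y e
  proof -
    let ?S = "{z \<in> tet_edges T. edge_class T glue z = e}"
    have "\<bar>gen_curv T glue x e - gen_curv T glue y e\<bar> = \<bar>\<Sum>z\<in>?S. edge_angle T glue x z - edge_angle T glue y z\<bar>"
      unfolding gen_curv_eq sum_subtractf by simp
    also have "\<dots> \<le> (\<Sum>z\<in>?S. \<bar>edge_angle T glue x z - edge_angle T glue y z\<bar>)"
      by (rule sum_abs)
    also have "\<dots> \<le> (\<Sum>z\<in>?S. \<epsilon> / (N + 1))"
      by (rule sum_mono) (use \<delta>[OF H] in simp)
    also have "\<dots> = real (card ?S) * (\<epsilon> / (N + 1))"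
      by simp
    also have "\<dots> \<le> N * (\<epsilon> / (N + 1))"
    proof (rule mult_right_mono)
      show "real (card ?S) \<le> N"
        unfolding N_def using card_mono[OF finite_tet_edges[OF assms(1)], of ?S] by simp
    qed (use \<open>0 < \<epsilon> / (N + 1)\<close> in simp)
    also have "\<dots> \<le> \<epsilon>"
      using assms(2) by (simp add: N_def field_simps)
    finally show ?thesis .
  qed
  then show ?thesis
    using \<open>0 < \<delta>\<close> by blast
qed

lemma gen_curv_dissipative:
  assumes "finite T"
  shows "(\<Sum>e\<in>edges T glue. (gen_curv T glue x e - gen_curv T glue y e) * (x e - y e)) \<le> 0"
proof -
  define h where "h z = (edge_angle T glue x z - edge_angle T glue y z)
                          * (x (edge_class T glue z) - y (edge_class T glue z))" for z
  have per_edge: "(gen_curv T glue x e - gen_curv T glue y e) * (x e - y e)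
                    = - (\<Sum>z\<in>{z \<in> tet_edges T. edge_class T glue z = e}. h z)" for e
  proof -
    have "(gen_curv T glue x e - gen_curv T glue y e) * (x e - y e)
          = - ((\<Sum>z\<in>{z \<in> tet_edges T. edge_class T glue z = e}. edge_angle T glue x z - edge_angle T glue y z)
                * (x e - y e))"
      unfolding gen_curv_eq sum_subtractf by (simp add: algebra_simps)
    also have "\<dots> = - (\<Sum>z\<in>{z \<in> tet_edges T. edge_class T glue z = e}. h z)"
      unfolding h_def sum_distrib_right by simp
    finally show ?thesis .
  qed
  have regroup: "(\<Sum>e\<in>edges T glue. (gen_curv T glue x e - gen_curv T glue y e) * (x e - y e))
          = - (\<Sum>z\<in>tet_edges T. h z)"
    unfolding per_edge sum_negf
    using sum.group[OF finite_tet_edges[OF assms] finite_edges[OF assms, of glue], where g = "edge_class T glue"]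
    by (simp add: edges_eq_image)
  have "(\<Sum>z\<in>tet_edges T. h z) = (\<Sum>\<sigma>\<in>T. \<Sum>p\<in>tet_pairs. h (\<sigma>, p))"
    by (simp add: tet_edges_eq sum.cartesian_product)
  also have "\<dots> \<ge> 0"
  proof (rule sum_nonneg)
    show "0 \<le> (\<Sum>p\<in>tet_pairs. h (\<sigma>, p))" for \<sigma>
      using tetrahedron_angles_monotone[of "\<lambda>q. x (edge_class T glue (\<sigma>, q))" "\<lambda>q. y (edge_class T glue (\<sigma>, q))"]
      by (simp only: h_def edge_angle_def case_prod_conv)
  qed
  finally show ?thesis
    unfolding regroup by simp
qed

lemma bounded_dissipative_field_gen_curv:
  assumes "finite T"
  shows "bounded_dissipative_field (edges T glue) (gen_curv T glue) (2 * pi + pi * real (card (tet_edges T)))"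
proof
  show "0 < 2 * pi + pi * real (card (tet_edges T))"
    by (simp add: add_pos_nonneg)
qed (use assms finite_edges gen_curv_bounded gen_curv_uniformly_continuous gen_curv_dissipative in auto)

theorem mainTheorem1:
  fixes T :: "'a set"
    and glue :: "'a \<times> nat \<Rightarrow> ('a \<times> nat \<times> (nat \<Rightarrow> nat)) option"
    and l0 :: "('a \<times> nat set) set \<Rightarrow> real"
  assumes "pseudo3 T glue" and "closed3 T glue"
  shows "\<exists>l. ricci_flow_solution T glue l0 l \<and>
           (\<forall>l'. ricci_flow_solution T glue l0 l' \<longrightarrow>
                 (\<forall>t \<ge> 0. \<forall>e \<in> edges T glue. l' t e = l t e))"
proof -
  have "finite T"
    using assms(1) by (simp add: pseudo3_def)
  interpret euler_scheme "edges T glue" "gen_curv T glue" "2 * pi + pi * real (card (tet_edges T))" l0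
    using bounded_dissipative_field_gen_curv[OF \<open>finite T\<close>] by (simp add: euler_scheme_def)
  have "ricci_flow_solution T glue l0 = ivp_solution (edges T glue) (gen_curv T glue) l0"
    by (simp add: fun_eq_iff ricci_flow_solution_def ivp_solution_def)
  then show ?thesis
    using ex_unique_ivp_solution by simp
qed

end
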